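(* Let $d\ge2$, $s\in\mathbb N$, $\beta>-d-s$, $\lambda_0,\dots,\lambda_{s-1}>0$, and let $f$ be a function on an open neighbourhood of $\mathbb V_0^{d+1}$ in $\mathbb R^{d+1}$ with continuous partial derivatives $\partial_t^kf$, $0\le k\le s$, and $\partial_t^sf\in L^2(\mathbb V_0^{d+1},\mathsf w_{\beta+s,0})$. Then for all $n\ge s$, $$\partial_t^s\operatorname{proj}_n^{\beta,-s}f(x,t)=\operatorname{proj}_{n-s}^{\beta+s,0}\big(\partial_t^sf\big)(x,t).$$
   Context: Cone $\mathbb V_0^{d+1}=\{(x,t)\in\mathbb R^d\times\mathbb R:\|x\|=t,\ 0\le t\le1\}$, points $(t\xi,t)$ with $\xi\in\mathbb S^{d-1}$; $\int_{\mathbb V_0^{d+1}}f\,\mathrm d\mathsf m=\int_0^1t^{d-1}\int_{\mathbb S^{d-1}}f(t\xi,t)\mathrm d\sigma(\xi)\mathrm dt$; $\omega_d=2\pi^{d/2}/\Gamma(d/2)$; $\mathsf w_{\beta,\gamma}(t)=t^\beta(1-t)^\gamma$. $\partial_t$ is the partial derivative in the last variable with $x$ held fixed. Jacobi polynomials for real parameters: $P_n^{(\alpha,\beta)}(u)=\sum_{k=0}^n\frac{(\alpha+k+1)_{n-k}(-n)_k(n+\alpha+\beta+1)_k}{n!\,k!}(\frac{1-u}{2})^k$; $A_n^{(\alpha,\beta)}=2^n/(n+\alpha+\beta+1)_n$; $\widehat P_n^{(\alpha,\beta)}=A_n^{(\alpha,\beta)}P_n^{(\alpha,\beta)}$; for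 $\alpha>-1-s$, $J_n^{(\alpha,-s)}(u)=\frac{(u+1)^n}{n!}$ ($n\le s-1$), $J_n^{(\alpha,-s)}(u)=\int_{-1}^u\frac{(u-w)^{s-1}}{(s-1)!}\widehat P_{n-s}^{(\alpha+s,0)}(w)\mathrm dw$ ($n\ge s$). $\{Y_\ell^m\}$ orthonormal basis of degree-$m$ spherical harmonics for $\frac1{\omega_d}\int\cdot\,\mathrm d\sigma$, extended homogeneously to harmonic polynomials on $\mathbb R^d$. $\langle f,g\rangle_{\beta',\gamma}=b_{\beta',\gamma}\int_{\mathbb V_0^{d+1}}fg\,\mathsf w_{\beta',\gamma}\mathrm d\mathsf m$ ($\beta'>-d,\gamma>-1$, $b$ normalizing $\langle1,1\rangle=1$); $\mathsf S_{m,\ell}^{n,(\beta',\gamma)}(x,t)=P_{n-m}^{(2m+\beta'+d-1,\gamma)}(1-2t)Y_\ell^m(x)$; $\operatorname{proj}_n^{\beta',\gamma}g=\sum_{m\le n,\ell}\frac{\langle g,\mathsf S_{m,\ell}^{n,(\beta',\gamma)}\rangle_{\beta',\gamma}}{\langle\mathsf S_{m,\ell}^{n,(\beta',\gamma)},\mathsf S_{m,\ell}^{n,(\beta',\gamma)}\rangle_{\beta',\gamma}}\mathsf S_{m,\ell}^{n,(\beta',\gamma)}$ as a polynomial in $(x,t)$. $\langle f,g\rangle_{\beta,-s}=\frac1{\omega_d}\int_{\mathbb V_0^{d+1}}\partial_t^sf\,\partial_t^sg\,t^{\beta+s}\mathrm d\mathsf m+\sum_{k=0}^{s-1}\frac{\lambda_k}{\omega_d}\int_{\mathbb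 S^{d-1}}\partial_t^kf(\xi,1)\partial_t^kg(\xi,1)\mathrm d\sigma(\xi)$; $\mathsf S_{m,\ell}^{n,(\beta,-s)}(x,t)=J_{n-m}^{(2m+\beta+d-1,-s)}(1-2t)Y_\ell^m(x)$; $\operatorname{proj}_n^{\beta,-s}f=\sum_{m\le n,\ell}\frac{\langle f,\mathsf S_{m,\ell}^{n,(\beta,-s)}\rangle_{\beta,-s}}{\langle\mathsf S_{m,\ell}^{n,(\beta,-s)},\mathsf S_{m,\ell}^{n,(\beta,-s)}\rangle_{\beta,-s}}\mathsf S_{m,\ell}^{n,(\beta,-s)}$, a polynomial in $(x,t)$. *)

theory Defs
  imports "HOL-Analysis.Analysis"
begin

text \<open>Points of R^(d+1) are pairs (x,t) with x :: real^'d, d = CARD('d).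
  Functions on R^(d+1) are curried: f :: real^'d => real => real.\<close>

definition cone :: "((real^'d::finite) \<times> real) set" where
  "cone = {(x, t). norm x = t \<and> 0 \<le> t \<and> t \<le> 1}"

definition omega_d :: "'d::finite itself \<Rightarrow> real" where
  "omega_d _ = 2 * pi powr (real CARD('d) / 2) / Gamma (real CARD('d) / 2)"

text \<open>Surface integral over the unit sphere S^(d-1) (w.r.t. surface measure sigma),
  via polar coordinates: int_S g dsigma = d * int_{unit ball} g(x/|x|) dx.\<close>
definition sphere_int :: "(real^'d::finite \<Rightarrow> real) \<Rightarrow> real" where
  "sphere_int g = real CARD('d) *
     set_lebesgue_integral lborel (cball 0 1) (\<lambda>x. g (x /\<^sub>R norm x))"

text \<open>Integral over the cone w.r.t. dm: int_0^1 t^(d-1) int_S F(t xi, t) dsigma dt,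
  which by polar coordinates equals int_{unit ball} F(y, |y|) dy.\<close>
definition cone_int :: "(real^'d::finite \<Rightarrow> real \<Rightarrow> real) \<Rightarrow> real" where
  "cone_int F = set_lebesgue_integral lborel (cball 0 1) (\<lambda>y. F y (norm y))"

definition dt :: "nat \<Rightarrow> (real^'d \<Rightarrow> real \<Rightarrow> real) \<Rightarrow> real^'d \<Rightarrow> real \<Rightarrow> real" where
  "dt k f x = (deriv ^^ k) (f x)"

definition hom_poly :: "nat \<Rightarrow> (real^'d::finite \<Rightarrow> real) \<Rightarrow> bool" where
  "hom_poly m p \<longleftrightarrow> (\<exists>c :: ('d \<Rightarrow> nat) \<Rightarrow> real. \<forall>x.
      p x = (\<Sum>\<alpha>\<in>{\<alpha>. sum \<alpha> UNIV = m}. c \<alpha> * (\<Prod>i\<in>UNIV. (x $ i) ^ \<alpha> i)))"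

definition harmonic :: "(real^'d::finite \<Rightarrow> real) \<Rightarrow> bool" where
  "harmonic p \<longleftrightarrow> (\<forall>x. (\<Sum>i\<in>UNIV.
      deriv (\<lambda>u. deriv (\<lambda>v. p (x + v *\<^sub>R axis i 1)) u) 0) = 0)"

text \<open>Y m l, l < N m, is an orthonormal basis (for (1/omega_d) int_S . dsigma) of the
  space of harmonic homogeneous polynomials of degree m (spherical harmonics,
  extended homogeneously).\<close>
definition sph_harm_basis :: "(nat \<Rightarrow> nat) \<Rightarrow> (nat \<Rightarrow> nat \<Rightarrow> real^'d::finite \<Rightarrow> real) \<Rightarrow> bool" where
  "sph_harm_basis N Y \<longleftrightarrow> (\<forall>m.
     (\<forall>l < N m. hom_poly m (Y m l) \<and> harmonic (Y m l)) \<and>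
     (\<forall>l < N m. \<forall>l' < N m.
        sphere_int (\<lambda>\<xi>. Y m l \<xi> * Y m l' \<xi>) / omega_d TYPE('d) = (if l = l' then 1 else 0)) \<and>
     (\<forall>p. hom_poly m p \<and> harmonic p \<longrightarrow>
        (\<exists>a. \<forall>x. p x = (\<Sum>l<N m. a l * Y m l x))))"

definition jacobiP :: "nat \<Rightarrow> real \<Rightarrow> real \<Rightarrow> real \<Rightarrow> real" where
  "jacobiP n a b u = (\<Sum>k = 0..n.
     pochhammer (a + real k + 1) (n - k) * pochhammer (- real n) k
       * pochhammer (real n + a + b + 1) k / (fact n * fact k) * ((1 - u) / 2) ^ k)"

definition jacobiA :: "nat \<Rightarrow> real \<Rightarrow> real \<Rightarrow> real" where
  "jacobiA n a b = 2 ^ n / pochhammer (real n + a + b + 1) n"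

definition jacobiP_hat :: "nat \<Rightarrow> real \<Rightarrow> real \<Rightarrow> real \<Rightarrow> real" where
  "jacobiP_hat n a b u = jacobiA n a b * jacobiP n a b u"

definition jacobiJ :: "nat \<Rightarrow> real \<Rightarrow> nat \<Rightarrow> real \<Rightarrow> real" where
  "jacobiJ n a s u = (if n \<le> s - 1 then (u + 1) ^ n / fact n
     else interval_lebesgue_integral lborel (ereal (-1)) (ereal u)
       (\<lambda>w. (u - w) ^ (s - 1) / fact (s - 1) * jacobiP_hat (n - s) (a + real s) 0 w))"

definition wcone :: "real \<Rightarrow> real \<Rightarrow> real \<Rightarrow> real" where
  "wcone b g t = t powr b * (1 - t) powr g"

definition w_ip :: "real \<Rightarrow> real \<Rightarrow> (real^'d::finite \<Rightarrow> real \<Rightarrow> real)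
    \<Rightarrow> (real^'d \<Rightarrow> real \<Rightarrow> real) \<Rightarrow> real" where
  "w_ip b g f h = (1 / cone_int (\<lambda>(y::real^'d) t. wcone b g t)) *
      cone_int (\<lambda>y t. f y t * h y t * wcone b g t)"

definition S_w :: "(nat \<Rightarrow> nat \<Rightarrow> real^'d::finite \<Rightarrow> real) \<Rightarrow> real \<Rightarrow> real
    \<Rightarrow> nat \<Rightarrow> nat \<Rightarrow> nat \<Rightarrow> real^'d \<Rightarrow> real \<Rightarrow> real" where
  "S_w Y b g n m l x t =
     jacobiP (n - m) (2 * real m + b + real CARD('d) - 1) g (1 - 2 * t) * Y m l x"

definition proj_w :: "(nat \<Rightarrow> nat) \<Rightarrow> (nat \<Rightarrow> nat \<Rightarrow> real^'d::finite \<Rightarrow> real) \<Rightarrow> real \<Rightarrow> real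
    \<Rightarrow> nat \<Rightarrow> (real^'d \<Rightarrow> real \<Rightarrow> real) \<Rightarrow> real^'d \<Rightarrow> real \<Rightarrow> real" where
  "proj_w N Y b g n f x t = (\<Sum>m\<le>n. \<Sum>l<N m.
     w_ip b g f (S_w Y b g n m l) / w_ip b g (S_w Y b g n m l) (S_w Y b g n m l)
       * S_w Y b g n m l x t)"

definition sob_ip :: "real \<Rightarrow> nat \<Rightarrow> (nat \<Rightarrow> real) \<Rightarrow> (real^'d::finite \<Rightarrow> real \<Rightarrow> real)
    \<Rightarrow> (real^'d \<Rightarrow> real \<Rightarrow> real) \<Rightarrow> real" where
  "sob_ip \<beta> s lam f h =
     1 / omega_d TYPE('d) * cone_int (\<lambda>y t. dt s f y t * dt s h y t * t powr (\<beta> + real s))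
     + (\<Sum>k<s. lam k / omega_d TYPE('d) * sphere_int (\<lambda>\<xi>. dt k f \<xi> 1 * dt k h \<xi> 1))"

definition S_sob :: "(nat \<Rightarrow> nat \<Rightarrow> real^'d::finite \<Rightarrow> real) \<Rightarrow> real \<Rightarrow> nat
    \<Rightarrow> nat \<Rightarrow> nat \<Rightarrow> nat \<Rightarrow> real^'d \<Rightarrow> real \<Rightarrow> real" where
  "S_sob Y \<beta> s n m l x t =
     jacobiJ (n - m) (2 * real m + \<beta> + real CARD('d) - 1) s (1 - 2 * t) * Y m l x"

definition proj_sob :: "(nat \<Rightarrow> nat) \<Rightarrow> (nat \<Rightarrow> nat \<Rightarrow> real^'d::finite \<Rightarrow> real) \<Rightarrow> real \<Rightarrow> nat
    \<Rightarrow> (nat \<Rightarrow> real) \<Rightarrow> nat \<Rightarrow> (real^'d \<Rightarrow> real \<Rightarrow> real) \<Rightarrow> real^'d \<Rightarrow> real \<Rightarrow> real" where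
  "proj_sob N Y \<beta> s lam n f x t = (\<Sum>m\<le>n. \<Sum>l<N m.
     sob_ip \<beta> s lam f (S_sob Y \<beta> s n m l)
       / sob_ip \<beta> s lam (S_sob Y \<beta> s n m l) (S_sob Y \<beta> s n m l)
       * S_sob Y \<beta> s n m l x t)"

end

theory Submission
  imports Defs
begin

text \<open>By Cauchy's formula for repeated integration, \<open>jacobiJ k \<alpha> s\<close> is for \<open>k \<ge> s\<close> the \<open>s\<close>-fold
  antiderivative from \<open>-1\<close> of \<open>jacobiP_hat (k - s) (\<alpha> + s) 0\<close>, and for \<open>k < s\<close> a polynomial of
  degree \<open>k < s\<close>. Hence \<open>dt s (S_sob Y \<beta> s n m l)\<close> is a nonzero multiple of
  \<open>S_w Y (\<beta> + s) 0 (n - s) m l\<close> if \<open>m \<le> n - s\<close> and vanishes otherwise, and in the first case the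
  lower \<open>t\<close>-derivatives vanish at \<open>t = 1\<close>. So the boundary terms of the Sobolev inner product drop
  out, the Sobolev coefficient of \<open>f\<close> becomes the weighted \<open>L\<^sup>2\<close> coefficient of \<open>dt s f\<close>, and
  differentiating the projection termwise gives the claim.\<close>

section \<open>Repeated antiderivatives\<close>

definition antideriv :: "real \<Rightarrow> (real \<Rightarrow> real) \<Rightarrow> real \<Rightarrow> real" where
  "antideriv a g u = interval_lebesgue_integral lborel (ereal a) (ereal u) g"

lemma antideriv_base [simp]: "antideriv a g a = 0"
  by (simp add: antideriv_def)

lemma interval_lebesgue_integrable_continuous:
  "continuous_on UNIV (g :: real \<Rightarrow> real) \<Longrightarrow> interval_lebesgue_integrable lborel (ereal a) (ereal b) g"
  by (rule interval_integrable_isCont) (simp add: continuous_on_eq_continuous_at)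

lemma antideriv_has_real_derivative:
  assumes "continuous_on UNIV g"
  shows "(antideriv a g has_real_derivative g u) (at u)"
proof -
  define lo hi where "lo = min a u - 1" and "hi = max a u + 1"
  have "((\<lambda>u. interval_lebesgue_integral lborel (ereal a) (ereal u) g)
      has_vector_derivative g u) (at u within {lo..hi})"
  proof (rule interval_integral_FTC2[of lo a hi g u])
    show "lo \<le> a" "a \<le> hi" "lo \<le> u" "u \<le> hi" unfolding lo_def hi_def by linarith+
    show "continuous_on {lo..hi} g" using assms by (rule continuous_on_subset) simp
  qed
  moreover have "u \<in> interior {lo..hi}"
    unfolding lo_def hi_def interior_atLeastAtMost_real by simp linarith
  ultimately have "((\<lambda>u. interval_lebesgue_integral lborel (ereal a) (ereal u) g)
      has_vector_derivative g u) (at u)"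
    by (simp only: at_within_interior)
  then show ?thesis
    unfolding antideriv_def has_real_derivative_iff_has_vector_derivative .
qed

lemma continuous_on_antideriv: "continuous_on UNIV g \<Longrightarrow> continuous_on UNIV (antideriv a g)"
  by (intro continuous_at_imp_continuous_on ballI) (rule DERIV_isCont[OF antideriv_has_real_derivative])

lemma continuous_on_funpow_antideriv:
  "continuous_on UNIV g \<Longrightarrow> continuous_on UNIV ((antideriv a ^^ k) g)"
  by (induction k) (auto intro: continuous_on_antideriv)

text \<open>The induction step is an integration by parts.\<close>
lemma antideriv_funpow_Cauchy:
  assumes "continuous_on UNIV g"
  shows "interval_lebesgue_integral lborel (ereal a) (ereal u) (\<lambda>w. (u - w) ^ k / fact k * g w)
           = (antideriv a ^^ Suc k) g u"
  using assms
proof (induction k arbitrary: g)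
  case 0
  then show ?case by (simp add: antideriv_def)
next
  case (Suc k)
  define G where "G = antideriv a g"
  have G_cont: "continuous_on UNIV G"
    unfolding G_def using Suc.prems by (rule continuous_on_antideriv)
  define F where "F w = (u - w) ^ Suc k / fact (Suc k) * G w" for w
  define h where "h w = (u - w) ^ Suc k / fact (Suc k) * g w - (u - w) ^ k / fact k * G w" for w
  have F_deriv: "(F has_real_derivative h w) (at w)" for w
  proof -
    have "((\<lambda>w. (u - w) ^ Suc k) has_real_derivative real (Suc k) * (u - w) ^ k * (0 - 1)) (at w)"
      by (rule derivative_eq_intros refl)+ simp
    then have "((\<lambda>w. (u - w) ^ Suc k / fact (Suc k)) has_real_derivative
        real (Suc k) * (u - w) ^ k * (0 - 1) / fact (Suc k)) (at w)"
      by (rule DERIV_cdivide)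
    then have "((\<lambda>w. (u - w) ^ Suc k / fact (Suc k)) has_real_derivative - ((u - w) ^ k / fact k)) (at w)"
      by (simp add: fact_Suc del: of_nat_Suc)
    from DERIV_mult[OF this antideriv_has_real_derivative[OF Suc.prems]]
    show ?thesis
      unfolding F_def G_def by (rule DERIV_cong) (simp add: h_def G_def mult.commute)
  qed
  have "interval_lebesgue_integral lborel (ereal a) (ereal u) h = F u - F a"
  proof (rule interval_integral_FTC_finite)
    have "continuous_on UNIV h"
      unfolding h_def by (intro continuous_intros G_cont Suc.prems) auto
    then show "continuous_on {min a u..max a u} h"
      by (rule continuous_on_subset) simp
    show "(F has_vector_derivative h w) (at w within {min a u..max a u})" for w
      using F_deriv[of w] unfolding has_real_derivative_iff_has_vector_derivative
      by (rule has_vector_derivative_at_within)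
  qed
  then have "interval_lebesgue_integral lborel (ereal a) (ereal u) h = 0"
    by (simp add: F_def G_def)
  moreover have "interval_lebesgue_integral lborel (ereal a) (ereal u) h
      = interval_lebesgue_integral lborel (ereal a) (ereal u) (\<lambda>w. (u - w) ^ Suc k / fact (Suc k) * g w)
        - interval_lebesgue_integral lborel (ereal a) (ereal u) (\<lambda>w. (u - w) ^ k / fact k * G w)"
    unfolding h_def
    by (intro interval_lebesgue_integral_diff interval_lebesgue_integrable_continuous
        continuous_intros G_cont Suc.prems) auto
  moreover have "interval_lebesgue_integral lborel (ereal a) (ereal u) (\<lambda>w. (u - w) ^ k / fact k * G w)
      = (antideriv a ^^ Suc (Suc k)) g u"
    using Suc.IH[OF G_cont] by (simp add: G_def funpow_Suc_right del: funpow.simps)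
  ultimately show ?case by simp
qed

lemma funpow_deriv_chain:
  assumes "\<And>j t. j < k \<Longrightarrow> (D j has_real_derivative D (Suc j) t) (at t)"
  shows "j \<le> k \<Longrightarrow> (deriv ^^ j) (D 0) = D j"
proof (induction j)
  case (Suc j)
  then show ?case
    using assms by (auto intro!: DERIV_imp_deriv)
qed simp

lemma funpow_deriv_linear_combination:
  assumes "finite A"
    and "\<And>i j t. i \<in> A \<Longrightarrow> j < k \<Longrightarrow> (D i j has_real_derivative D i (Suc j) t) (at t)"
  shows "(deriv ^^ k) (\<lambda>t. \<Sum>i\<in>A. c i * D i 0 t) = (\<lambda>t. \<Sum>i\<in>A. c i * D i k t)"
proof -
  have "((\<lambda>t. \<Sum>i\<in>A. c i * D i j t) has_real_derivative (\<Sum>i\<in>A. c i * D i (Suc j) t)) (at t)"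
    if "j < k" for j t
    using assms that by (auto intro!: DERIV_sum DERIV_cmult)
  then show ?thesis
    using funpow_deriv_chain[of k "\<lambda>j t. \<Sum>i\<in>A. c i * D i j t"] by simp
qed

lemma deriv_chain_reflected_affine:
  assumes "(H j has_real_derivative H (Suc j) (q - p * t)) (at (q - p * t))"
  shows "((\<lambda>t. (- p) ^ j * H j (q - p * t) * c)
           has_real_derivative (- p) ^ Suc j * H (Suc j) (q - p * t) * c) (at t)"
proof -
  have "((\<lambda>t. q - p * t) has_real_derivative - p) (at t)"
    by (rule derivative_eq_intros refl)+ simp
  from DERIV_chain2[OF assms this]
  have "((\<lambda>t. (- p) ^ j * H j (q - p * t) * c)
      has_real_derivative (- p) ^ j * (H (Suc j) (q - p * t) * - p) * c) (at t)"
    by (intro DERIV_cmult DERIV_cmult_right)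
  then show ?thesis
    by (rule DERIV_cong) (simp add: ac_simps)
qed

section \<open>Derivatives of the Sobolev basis\<close>

lemma continuous_on_jacobiP_hat: "continuous_on UNIV (jacobiP_hat n a b)"
  unfolding jacobiP_hat_def[abs_def] jacobiP_def by (intro continuous_intros) auto

lemma jacobiJ_eq_funpow_antideriv:
  assumes "1 \<le> s" "s \<le> n"
  shows "jacobiJ n a s u = (antideriv (-1) ^^ s) (jacobiP_hat (n - s) (a + real s) 0) u"
proof -
  have "\<not> n \<le> s - 1" "Suc (s - 1) = s"
    using assms by linarith+
  then show ?thesis
    unfolding jacobiJ_def using antideriv_funpow_Cauchy[OF continuous_on_jacobiP_hat, of "-1" u "s - 1"]
    by simp
qed

text \<open>For \<open>j \<le> s\<close>, the \<open>j\<close>-th derivative of \<open>jacobiJ n a s\<close>.\<close>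
definition jacobiJ_deriv :: "nat \<Rightarrow> real \<Rightarrow> nat \<Rightarrow> nat \<Rightarrow> real \<Rightarrow> real" where
  "jacobiJ_deriv n a s j u =
     (if s \<le> n then (antideriv (-1) ^^ (s - j)) (jacobiP_hat (n - s) (a + real s) 0) u
      else if j \<le> n then (u + 1) ^ (n - j) / fact (n - j) else 0)"

lemma jacobiJ_deriv_0:
  assumes "1 \<le> s"
  shows "jacobiJ_deriv n a s 0 u = jacobiJ n a s u"
proof (cases "s \<le> n")
  case True
  then show ?thesis
    using assms by (simp add: jacobiJ_deriv_def jacobiJ_eq_funpow_antideriv)
next
  case False
  then have "n \<le> s - 1"
    by linarith
  with False show ?thesis
    by (simp add: jacobiJ_deriv_def jacobiJ_def)
qed

lemma jacobiJ_deriv_order: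
  "1 \<le> s \<Longrightarrow> jacobiJ_deriv n a s s u = (if s \<le> n then jacobiP_hat (n - s) (a + real s) 0 u else 0)"
  by (simp add: jacobiJ_deriv_def)

lemma jacobiJ_deriv_at_minus_one: "j < s \<Longrightarrow> s \<le> n \<Longrightarrow> jacobiJ_deriv n a s j (-1) = 0"
  by (simp add: jacobiJ_deriv_def Suc_diff_Suc[symmetric] del: Suc_diff_Suc)

lemma jacobiJ_deriv_has_real_derivative:
  assumes "j < s"
  shows "(jacobiJ_deriv n a s j has_real_derivative jacobiJ_deriv n a s (Suc j) u) (at u)"
proof (cases "s \<le> n")
  case True
  have "s - j = Suc (s - Suc j)"
    using assms by simp
  then show ?thesis
    using True by (simp add: jacobiJ_deriv_def[abs_def] antideriv_has_real_derivative
        continuous_on_funpow_antideriv continuous_on_jacobiP_hat)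
next
  case False
  consider "j < n" | "j = n" | "n < j"
    by linarith
  then show ?thesis
  proof cases
    case 1
    define r where "r = n - Suc j"
    have nj: "n - j = Suc r"
      using 1 by (simp add: r_def)
    have "((\<lambda>u. (u + 1) ^ Suc r) has_real_derivative real (Suc r) * (u + 1) ^ r * (1 + 0)) (at u)"
      by (rule derivative_eq_intros refl)+ simp
    then have "((\<lambda>u. (u + 1) ^ Suc r / fact (Suc r)) has_real_derivative
        real (Suc r) * (u + 1) ^ r * (1 + 0) / fact (Suc r)) (at u)"
      by (rule DERIV_cdivide)
    then have "((\<lambda>u. (u + 1) ^ (n - j) / fact (n - j)) has_real_derivative
        (u + 1) ^ (n - Suc j) / fact (n - Suc j)) (at u)"
      unfolding nj r_def[symmetric] by (simp add: fact_Suc del: of_nat_Suc)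
    then show ?thesis
      using False 1 by (simp add: jacobiJ_deriv_def[abs_def])
  qed (use False in \<open>simp_all add: jacobiJ_deriv_def[abs_def]\<close>)
qed

lemma jacobiJ_reflected_deriv_chain:
  "j < s \<Longrightarrow> ((\<lambda>t. (- 2) ^ j * jacobiJ_deriv n a s j (1 - 2 * t) * c) has_real_derivative
     (- 2) ^ Suc j * jacobiJ_deriv n a s (Suc j) (1 - 2 * t) * c) (at t)"
  by (rule deriv_chain_reflected_affine) (rule jacobiJ_deriv_has_real_derivative)

lemma dt_S_sob:
  fixes Y :: "nat \<Rightarrow> nat \<Rightarrow> real^'d::finite \<Rightarrow> real"
  assumes "1 \<le> s" "k \<le> s"
  shows "dt k (S_sob Y \<beta> s n m l) x t =
    (- 2) ^ k * jacobiJ_deriv (n - m) (2 * real m + \<beta> + real CARD('d) - 1) s k (1 - 2 * t) * Y m l x"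
proof -
  define D where "D j t = (- 2) ^ j
    * jacobiJ_deriv (n - m) (2 * real m + \<beta> + real CARD('d) - 1) s j (1 - 2 * t) * Y m l x" for j t
  have "S_sob Y \<beta> s n m l x = D 0"
    using jacobiJ_deriv_0[OF assms(1)] by (simp add: S_sob_def D_def fun_eq_iff)
  moreover have "(D j has_real_derivative D (Suc j) t) (at t)" if "j < s" for j t
    unfolding D_def using that by (rule jacobiJ_reflected_deriv_chain)
  then have "(deriv ^^ k) (D 0) = D k"
    using funpow_deriv_chain assms(2) by blast
  ultimately show ?thesis
    by (simp add: dt_def D_def)
qed

lemma dt_proj_sob:
  fixes Y :: "nat \<Rightarrow> nat \<Rightarrow> real^'d::finite \<Rightarrow> real"
  assumes "1 \<le> s"
  shows "dt s (proj_sob N Y \<beta> s lam n f) x t = (\<Sum>m\<le>n. \<Sum>l<N m.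
     sob_ip \<beta> s lam f (S_sob Y \<beta> s n m l) / sob_ip \<beta> s lam (S_sob Y \<beta> s n m l) (S_sob Y \<beta> s n m l)
       * dt s (S_sob Y \<beta> s n m l) x t)"
proof -
  define P where "P = Sigma {..n} (\<lambda>m. {..<N m})"
  define c where "c = (\<lambda>(m, l). sob_ip \<beta> s lam f (S_sob Y \<beta> s n m l)
    / sob_ip \<beta> s lam (S_sob Y \<beta> s n m l) (S_sob Y \<beta> s n m l))"
  define D where "D = (\<lambda>(m, l) j t. (- 2) ^ j
    * jacobiJ_deriv (n - m) (2 * real m + \<beta> + real CARD('d) - 1) s j (1 - 2 * t) * Y m l x)"
  have sum_P: "(\<Sum>m\<le>n. \<Sum>l<N m. g m l) = (\<Sum>i\<in>P. case_prod g i)" for g :: "nat \<Rightarrow> nat \<Rightarrow> real"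
    unfolding P_def by (rule sum.Sigma) auto
  have "proj_sob N Y \<beta> s lam n f x = (\<lambda>t. \<Sum>i\<in>P. c i * D i 0 t)"
    unfolding proj_sob_def sum_P fun_eq_iff
    by (auto intro!: sum.cong simp: c_def D_def S_sob_def jacobiJ_deriv_0[OF assms])
  moreover have "(deriv ^^ s) (\<lambda>t. \<Sum>i\<in>P. c i * D i 0 t) = (\<lambda>t. \<Sum>i\<in>P. c i * D i s t)"
    by (rule funpow_deriv_linear_combination) (auto simp: P_def D_def simp del: power_Suc intro!: jacobiJ_reflected_deriv_chain)
  ultimately show ?thesis
    unfolding sum_P dt_def
    by (auto intro!: sum.cong simp: c_def D_def dt_S_sob[OF assms, unfolded dt_def])
qed

lemma dt_order_S_sob:
  fixes Y :: "nat \<Rightarrow> nat \<Rightarrow> real^'d::finite \<Rightarrow> real"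
  assumes "1 \<le> s" "m + s \<le> n"
  shows "dt s (S_sob Y \<beta> s n m l) x t = (- 2) ^ s
    * jacobiA (n - s - m) (2 * real m + (\<beta> + real s) + real CARD('d) - 1) 0 * S_w Y (\<beta> + real s) 0 (n - s) m l x t"
proof -
  have a: "2 * real m + \<beta> + real CARD('d) - 1 + real s = 2 * real m + (\<beta> + real s) + real CARD('d) - 1"
    by simp
  have "s \<le> n - m" "n - m - s = n - s - m"
    using assms(2) by auto
  then show ?thesis
    unfolding dt_S_sob[OF assms(1) order.refl] jacobiJ_deriv_order[OF assms(1)] a S_w_def jacobiP_hat_def
    by simp
qed

lemma dt_order_S_sob_eq_0:
  "1 \<le> s \<Longrightarrow> n < m + s \<Longrightarrow> dt s (S_sob Y \<beta> s n m l) x t = 0"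
  by (simp add: dt_S_sob jacobiJ_deriv_order)

lemma dt_S_sob_at_1:
  "1 \<le> s \<Longrightarrow> k < s \<Longrightarrow> m + s \<le> n \<Longrightarrow> dt k (S_sob Y \<beta> s n m l) x 1 = 0"
  by (simp add: dt_S_sob jacobiJ_deriv_at_minus_one)

lemma cone_int_cmult: "cone_int (\<lambda>y t. c * F y t) = c * cone_int F"
  by (simp add: cone_int_def)

lemma sob_ip_S_sob:
  fixes Y :: "nat \<Rightarrow> nat \<Rightarrow> real^'d::finite \<Rightarrow> real"
  assumes "1 \<le> s" "m + s \<le> n"
  shows "sob_ip \<beta> s lam g (S_sob Y \<beta> s n m l) =
    (- 2) ^ s * jacobiA (n - s - m) (2 * real m + (\<beta> + real s) + real CARD('d) - 1) 0 / omega_d TYPE('d)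
    * cone_int (\<lambda>y t. dt s g y t * S_w Y (\<beta> + real s) 0 (n - s) m l y t * t powr (\<beta> + real s))"
proof -
  define c where "c = (- 2) ^ s * jacobiA (n - s - m) (2 * real m + (\<beta> + real s) + real CARD('d) - 1) 0"
  have "sphere_int (\<lambda>\<xi>. dt k g \<xi> 1 * dt k (S_sob Y \<beta> s n m l) \<xi> 1) = 0" if "k < s" for k
    using assms that by (simp add: dt_S_sob_at_1 sphere_int_def)
  moreover have "cone_int (\<lambda>y t. dt s g y t * dt s (S_sob Y \<beta> s n m l) y t * t powr (\<beta> + real s))
      = c * cone_int (\<lambda>y t. dt s g y t * S_w Y (\<beta> + real s) 0 (n - s) m l y t * t powr (\<beta> + real s))"
    unfolding dt_order_S_sob[OF assms] c_def cone_int_cmult[symmetric] by (simp add: ac_simps)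
  ultimately show ?thesis
    by (simp add: sob_ip_def c_def)
qed

section \<open>Integrals over the cone\<close>

lemma dyadic_shell_exists:
  fixes r :: real
  assumes "0 < r" "r \<le> 1"
  obtains k where "(1/2) ^ Suc k < r" "r \<le> (1/2) ^ k"
proof -
  have ex: "\<exists>n. (1/2::real) ^ n < r"
    using real_arch_pow_inv[OF assms(1), of "1/2"] by simp
  define n where "n = (LEAST n. (1/2::real) ^ n < r)"
  have n: "(1/2::real) ^ n < r"
    unfolding n_def by (rule LeastI_ex[OF ex])
  then obtain k where k: "n = Suc k"
    using assms(2) by (cases n) auto
  have "\<not> (1/2::real) ^ k < r"
    unfolding n_def by (rule not_less_Least) (simp add: k n_def[symmetric])
  with n k show ?thesis
    using that by (auto simp: not_less)
qed

lemma norm_powr_le_on_dyadic_shell: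
  fixes y :: "'a::real_normed_vector"
  assumes "(1/2) ^ Suc k < norm y" "norm y \<le> (1/2) ^ k"
  shows "norm y powr p \<le> 2 powr \<bar>p\<bar> * (1/2) powr (real k * p)"
proof -
  have y: "0 < norm y"
    using assms(1) zero_less_power[of "1/2::real" "Suc k"] by linarith
  have k: "((1/2::real) ^ k) powr p = (1/2) powr (real k * p)"
    by (simp add: powr_realpow[symmetric] powr_powr)
  have Suc_k: "((1/2::real) ^ Suc k) powr p = 2 powr (- p) * (1/2) powr (real k * p)"
    by (simp add: powr_realpow[symmetric] powr_powr powr_add algebra_simps powr_divide powr_minus_divide powr_mult)
  have "1 \<le> (2::real) powr \<bar>p\<bar>"
    using powr_mono[of 0 "\<bar>p\<bar>" "2::real"] by simp
  then have le: "(1/2) powr (real k * p) \<le> 2 powr \<bar>p\<bar> * (1/2) powr (real k * p)"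
    using mult_right_mono[of 1 "2 powr \<bar>p\<bar>" "(1/2::real) powr (real k * p)"] by simp
  show ?thesis
  proof (cases "0 \<le> p")
    case True
    have "norm y powr p \<le> ((1/2) ^ k) powr p"
      using True y assms(2) by (intro powr_mono2) auto
    with le k show ?thesis
      by (metis order.trans)
  next
    case False
    have "norm y powr p \<le> ((1/2) ^ Suc k) powr p"
      using False assms(1) by (intro powr_mono2') auto
    with False Suc_k show ?thesis
      by simp
  qed
qed

lemma norm_powr_cball_le_dyadic_shell_sum:
  fixes y :: "'a::real_normed_vector"
  shows "ennreal (norm (indicator (cball 0 1) y *\<^sub>R norm y powr p)) \<le> (\<Sum>k. ennreal (2 powr \<bar>p\<bar> * (1/2) powr (real k * p))
    * indicator (cball 0 ((1/2) ^ k) - cball 0 ((1/2) ^ Suc k)) y)"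
    (is "_ \<le> (\<Sum>k. ?g k)")
proof (cases "y \<in> cball 0 1 \<and> y \<noteq> 0")
  case True
  then obtain k where "(1/2) ^ Suc k < norm y" "norm y \<le> (1/2) ^ k"
    using dyadic_shell_exists[of "norm y"] by auto
  then have "ennreal (norm (indicator (cball 0 1) y *\<^sub>R norm y powr p)) \<le> ?g k"
    using True by (simp add: ennreal_leI norm_powr_le_on_dyadic_shell)
  also have "\<dots> = (\<Sum>i\<in>{k}. ?g i)"
    by (simp del: sum_mult_indicator)
  also have "\<dots> \<le> (\<Sum>k. ?g k)"
    by (rule sum_le_suminf) (auto intro: summableI)
  finally show ?thesis .
qed (auto simp: indicator_def)

lemma borel_measurable_norm_lborel: "(\<lambda>x::'a::euclidean_space. norm x) \<in> borel_measurable lborel"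
  using borel_measurable_norm by (simp add: measurable_lborel1)

text \<open>On the dyadic shell of radius \<open>2^-k\<close>, of volume \<open>O(2^(-k DIM('a)))\<close>, the integrand is
  \<open>O(2^(-k p))\<close>; the resulting geometric series converges because \<open>p + DIM('a) > 0\<close>.\<close>
lemma set_integrable_norm_powr_cball:
  assumes p: "p > - real DIM('a::euclidean_space)"
  shows "set_integrable lborel (cball (0::'a) 1) (\<lambda>y. norm y powr p)"
proof -
  define d where "d = DIM('a)"
  define A where "A k = cball (0::'a) ((1/2) ^ k) - cball 0 ((1/2) ^ Suc k)" for k
  define M where "M k = 2 powr \<bar>p\<bar> * (1/2) powr (real k * p)" for k
  define r where "r = (1/2::real) powr (p + real d)"
  have r: "0 \<le> r" "r < 1"
    using p powr_less_mono'[of "1/2::real" 0 "p + real d"] by (auto simp: r_def d_def)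
  have A_sets: "A k \<in> sets lborel" for k
    unfolding A_def by auto
  have shell_bound: "ennreal (norm (indicator (cball 0 1) y *\<^sub>R norm y powr p))
      \<le> (\<Sum>k. ennreal (M k) * indicator (A k) y)" for y :: 'a
    unfolding A_def M_def by (rule norm_powr_cball_le_dyadic_shell_sum)
  have geometric: "M k * (unit_ball_vol (real d) * ((1/2) ^ k) ^ d) = (2 powr \<bar>p\<bar> * unit_ball_vol (real d)) * r ^ k" for k
  proof -
    have "((1/2::real) ^ k) ^ d = (1/2) powr (real k * real d)"
      by (simp add: power_mult[symmetric] powr_realpow[symmetric] powr_powr)
    moreover have "r ^ k = (1/2) powr (real k * p) * (1/2) powr (real k * real d)"
      by (simp add: r_def powr_realpow[symmetric] powr_powr powr_add[symmetric] algebra_simps)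
    ultimately show ?thesis
      by (simp add: M_def)
  qed
  have "(\<integral>\<^sup>+y. ennreal (norm (indicator (cball (0::'a) 1) y *\<^sub>R norm y powr p)) \<partial>lborel)
        \<le> (\<integral>\<^sup>+y. (\<Sum>k. ennreal (M k) * indicator (A k) y) \<partial>lborel)"
    by (rule nn_integral_mono) (rule shell_bound)
  also have "\<dots> = (\<Sum>k. ennreal (M k) * emeasure lborel (A k))"
    using A_sets by (simp add: nn_integral_suminf nn_integral_cmult_indicator)
  also have "\<dots> \<le> (\<Sum>k. ennreal (M k * (unit_ball_vol (real d) * ((1/2) ^ k) ^ d)))"
  proof (intro suminf_le summableI)
    fix k
    have "emeasure lborel (A k) \<le> emeasure lborel (cball (0::'a) ((1/2) ^ k))"
      by (rule emeasure_mono) (auto simp: A_def)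
    then show "ennreal (M k) * emeasure lborel (A k) \<le> ennreal (M k * (unit_ball_vol (real d) * ((1/2) ^ k) ^ d))"
      by (simp add: emeasure_cball d_def ennreal_mult' M_def mult_left_mono)
  qed
  also have "\<dots> < \<infinity>"
    unfolding geometric using r
    by (simp add: ennreal_suminf_neq_top summable_geometric top.not_eq_extremum)
  finally show ?thesis
    unfolding set_integrable_def
    by (rule integrableI_bounded[rotated])
      (intro borel_measurable_scaleR borel_measurable_indicator powr_real_measurable
        borel_measurable_norm_lborel borel_measurable_const, simp_all)
qed

lemma borel_measurable_wcone_norm: "(\<lambda>y::'a::euclidean_space. wcone p q (norm y)) \<in> borel_measurable lborel"
  unfolding wcone_def
  by (intro borel_measurable_times powr_real_measurable borel_measurable_norm_lborel borel_measurable_diff) auto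

lemma AE_lborel_norm_neq_1: "AE y in lborel. norm (y::'a::euclidean_space) \<noteq> 1"
proof (rule AE_I')
  show "sphere (0::'a) 1 \<in> null_sets lborel"
    using negligible_sphere[of "0::'a" 1]
    by (auto simp: null_sets_completion_iff negligible_iff_null_sets negligible_convex_frontier)
qed auto

text \<open>\<open>(1 - t) powr 0\<close> is \<open>0\<close>, not \<open>1\<close>, at \<open>t = 1\<close>; this only affects the unit sphere, a null set.\<close>
lemma cone_int_wcone_0:
  fixes F :: "real^'d::finite \<Rightarrow> real \<Rightarrow> real"
  assumes "set_borel_measurable lborel (cball 0 1) (\<lambda>y. F y (norm y))"
  shows "cone_int (\<lambda>y t. F y t * wcone p 0 t) = cone_int (\<lambda>y t. F y t * t powr p)"
  unfolding cone_int_def set_lebesgue_integral_def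
proof (rule integral_cong_AE)
  have F: "(\<lambda>y. indicator (cball (0::real^'d) 1) y *\<^sub>R F y (norm y)) \<in> borel_measurable lborel"
    using assms by (simp add: set_borel_measurable_def)
  show "(\<lambda>y. indicator (cball (0::real^'d) 1) y *\<^sub>R (F y (norm y) * wcone p 0 (norm y))) \<in> borel_measurable lborel"
    using borel_measurable_times[OF F borel_measurable_wcone_norm] by (simp add: mult.assoc)
  show "(\<lambda>y. indicator (cball (0::real^'d) 1) y *\<^sub>R (F y (norm y) * norm y powr p)) \<in> borel_measurable lborel"
    using borel_measurable_times[OF F powr_real_measurable[OF borel_measurable_norm_lborel borel_measurable_const]]
    by (simp add: mult.assoc)
  show "AE y in lborel. indicator (cball (0::real^'d) 1) y *\<^sub>R (F y (norm y) * wcone p 0 (norm y))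
      = indicator (cball 0 1) y *\<^sub>R (F y (norm y) * norm y powr p)"
    using AE_lborel_norm_neq_1 by eventually_elim (auto simp: wcone_def indicator_def)
qed

lemma set_borel_measurable_cball_continuous:
  assumes "continuous_on (cball 0 1) (f :: 'a::euclidean_space \<Rightarrow> real)"
  shows "set_borel_measurable lborel (cball 0 1) f"
proof -
  have "(\<lambda>x. indicator (cball 0 1) x *\<^sub>R f x) \<in> borel_measurable borel"
    by (rule borel_measurable_continuous_on_indicator) (simp_all add: assms)
  then show ?thesis
    unfolding set_borel_measurable_def by simp
qed

lemma w_ip_0_eq_cone_int_powr:
  fixes F G :: "real^'d::finite \<Rightarrow> real \<Rightarrow> real"
  assumes "continuous_on (cball 0 1) (\<lambda>y. F y (norm y))" "continuous_on (cball 0 1) (\<lambda>y. G y (norm y))"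
  shows "w_ip p 0 F G = cone_int (\<lambda>y t. F y t * G y t * t powr p) / cone_int (\<lambda>(y::real^'d) t. t powr p)"
proof -
  have "cone_int (\<lambda>y t. F y t * G y t * wcone p 0 t) = cone_int (\<lambda>y t. F y t * G y t * t powr p)"
    using cone_int_wcone_0[of "\<lambda>y t. F y t * G y t"] assms
    by (simp add: set_borel_measurable_cball_continuous continuous_on_mult)
  moreover have "cone_int (\<lambda>(y::real^'d) t. wcone p 0 t) = cone_int (\<lambda>(y::real^'d) t. t powr p)"
    using cone_int_wcone_0[of "\<lambda>y t. 1"] by (simp add: set_borel_measurable_cball_continuous)
  ultimately show ?thesis
    by (simp add: w_ip_def)
qed

lemma cone_int_powr_pos:
  assumes p: "p > - real CARD('d::finite)"
  shows "0 < cone_int (\<lambda>(y::real^'d) t. t powr p)"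
proof -
  define h where "h y = indicator (cball (0::real^'d) 1) y *\<^sub>R norm y powr p" for y
  have h_int: "integrable lborel h"
    using set_integrable_norm_powr_cball[where 'a = "real^'d"] p
    by (simp add: set_integrable_def h_def[abs_def])
  have h_nonneg: "0 \<le> h y" for y
    by (simp add: h_def)
  have "0 \<le> integral\<^sup>L lborel h"
    using h_nonneg by (simp add: integral_nonneg_AE)
  moreover have "integral\<^sup>L lborel h \<noteq> 0"
  proof
    assume "integral\<^sup>L lborel h = 0"
    then have "AE y in lborel. h y = 0"
      using integral_nonneg_eq_0_iff_AE[OF h_int] h_nonneg by simp
    then obtain N where N: "{y. h y \<noteq> 0} \<subseteq> N" "N \<in> null_sets lborel"
      by (rule AE_E) (auto simp: null_sets_def)
    have "negligible N"
      using N(2) by (simp add: negligible_iff_null_sets null_sets_completionI)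
    moreover have "h y \<noteq> 0" if "y \<in> ball 0 1 - {0}" for y
      using that by (simp add: h_def indicator_def)
    then have "ball 0 1 - {0} \<subseteq> N"
      using N(1) by blast
    ultimately have "negligible (ball (0::real^'d) 1 - {0})"
      by (rule negligible_subset)
    moreover obtain c :: "real^'d" where "norm c = 1/2"
      using vector_choose_size[of "1/2"] by auto
    then have "c \<in> ball 0 1 - {0}"
      by auto
    then have "ball (0::real^'d) 1 - {0} \<noteq> {}"
      by blast
    moreover have "open (ball (0::real^'d) 1 - {0})"
      by (simp add: open_Diff)
    ultimately show False
      using open_not_negligible by blast
  qed
  ultimately have "0 < integral\<^sup>L lborel h"
    by linarith
  then show ?thesis
    by (simp add: cone_int_def set_lebesgue_integral_def h_def[abs_def])
qed

section \<open>Comparison of the Fourier coefficients\<close>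

lemma continuous_on_hom_poly: "hom_poly m p \<Longrightarrow> continuous_on A p"
  unfolding hom_poly_def
  by (auto intro!: continuous_intros elim!: continuous_on_cong[THEN iffD2, rotated, OF refl])

lemma continuous_on_S_w_cone:
  fixes Y :: "nat \<Rightarrow> nat \<Rightarrow> real^'d::finite \<Rightarrow> real"
  assumes "sph_harm_basis N Y" "l < N m"
  shows "continuous_on A (\<lambda>y. S_w Y b g n m l y (norm y))"
proof -
  have "hom_poly m (Y m l)"
    using assms unfolding sph_harm_basis_def by blast
  then have "continuous_on A (Y m l)"
    by (rule continuous_on_hom_poly)
  then show ?thesis
    unfolding S_w_def jacobiP_def by (intro continuous_intros) auto
qed

lemma continuous_on_cone_restriction:
  assumes "continuous_on U (\<lambda>(x, t). F x t)" "cone \<subseteq> U"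
  shows "continuous_on (cball 0 1) (\<lambda>y. F y (norm y))"
proof -
  have "continuous_on (cball 0 1) (\<lambda>y. (\<lambda>(x, t). F x t) (y, norm y))"
    by (rule continuous_on_compose2[OF assms(1)]) (use assms(2) in \<open>auto intro!: continuous_intros simp: cone_def\<close>)
  then show ?thesis
    by simp
qed

lemma omega_d_neq_0: "omega_d TYPE('d::finite) \<noteq> 0"
proof -
  have "Gamma (real CARD('d) / 2) > 0"
    by (rule Gamma_real_pos) simp
  then show ?thesis
    by (simp add: omega_d_def less_imp_neq[symmetric])
qed

lemma jacobiA_neq_0: "a > -1 \<Longrightarrow> jacobiA n a 0 \<noteq> 0"
  using pochhammer_pos[of "real n + a + 1" n] by (simp add: jacobiA_def)

lemma sob_coefficient_eq_w_coefficient: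
  fixes Y :: "nat \<Rightarrow> nat \<Rightarrow> real^'d::finite \<Rightarrow> real"
  assumes s: "1 \<le> s" and \<beta>: "\<beta> > - real CARD('d) - real s"
    and basis: "sph_harm_basis N Y" and l: "l < N m" and m: "m + s \<le> n"
    and f: "continuous_on (cball 0 1) (\<lambda>y. dt s f y (norm y))"
  shows "sob_ip \<beta> s lam f (S_sob Y \<beta> s n m l) / sob_ip \<beta> s lam (S_sob Y \<beta> s n m l) (S_sob Y \<beta> s n m l)
      * dt s (S_sob Y \<beta> s n m l) x t
    = w_ip (\<beta> + real s) 0 (dt s f) (S_w Y (\<beta> + real s) 0 (n - s) m l)
        / w_ip (\<beta> + real s) 0 (S_w Y (\<beta> + real s) 0 (n - s) m l) (S_w Y (\<beta> + real s) 0 (n - s) m l)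
      * S_w Y (\<beta> + real s) 0 (n - s) m l x t"
proof -
  define q where "q = \<beta> + real s"
  define Sw where "Sw = S_w Y q 0 (n - s) m l"
  define c where "c = (- 2) ^ s * jacobiA (n - s - m) (2 * real m + q + real CARD('d) - 1) 0"
  define \<omega> where "\<omega> = omega_d TYPE('d)"
  define C where "C = cone_int (\<lambda>(y::real^'d) t. t powr q)"
  define I where "I F = cone_int (\<lambda>y t. F y t * Sw y t * t powr q)" for F
  have "c \<noteq> 0"
    unfolding c_def using \<beta> by (simp add: jacobiA_neq_0 q_def)
  have "\<omega> \<noteq> 0"
    unfolding \<omega>_def by (rule omega_d_neq_0)
  have "0 < C"
    unfolding C_def using \<beta> by (intro cone_int_powr_pos) (simp add: q_def)
  have dt_S: "dt s (S_sob Y \<beta> s n m l) = (\<lambda>y t. c * Sw y t)"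
    using dt_order_S_sob[OF s m, of Y \<beta> l] by (simp add: fun_eq_iff c_def Sw_def q_def)
  have sob: "sob_ip \<beta> s lam g (S_sob Y \<beta> s n m l) = c / \<omega> * I (dt s g)" for g
    using sob_ip_S_sob[OF s m] by (simp add: I_def c_def \<omega>_def Sw_def q_def)
  have I_cmult: "I (\<lambda>y t. c * Sw y t) = c * I Sw"
    by (simp add: I_def cone_int_cmult[symmetric] ac_simps)
  have Sw_cont: "continuous_on (cball 0 1) (\<lambda>y. Sw y (norm y))"
    unfolding Sw_def using basis l by (rule continuous_on_S_w_cone)
  then have w: "w_ip q 0 F Sw = I F / C" if "continuous_on (cball 0 1) (\<lambda>y. F y (norm y))" for F
    using w_ip_0_eq_cone_int_powr[of F Sw, OF that Sw_cont] by (simp add: I_def C_def)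
  show ?thesis
    unfolding q_def[symmetric] Sw_def[symmetric] dt_S sob w[of "dt s f", OF f] w[of Sw, OF Sw_cont] I_cmult
    using \<open>c \<noteq> 0\<close> \<open>\<omega> \<noteq> 0\<close> \<open>0 < C\<close> by (cases "I Sw = 0") (simp_all add: field_simps)
qed

lemma dt_proj_sob_eq_proj_w:
  fixes Y :: "nat \<Rightarrow> nat \<Rightarrow> real^'d::finite \<Rightarrow> real"
  assumes s: "1 \<le> s" "s \<le> n" and \<beta>: "\<beta> > - real CARD('d) - real s"
    and basis: "sph_harm_basis N Y"
    and f: "continuous_on (cball 0 1) (\<lambda>y. dt s f y (norm y))"
  shows "dt s (proj_sob N Y \<beta> s lam n f) x t = proj_w N Y (\<beta> + real s) 0 (n - s) (dt s f) x t"
proof -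
  define W where "W m l = w_ip (\<beta> + real s) 0 (dt s f) (S_w Y (\<beta> + real s) 0 (n - s) m l)
    / w_ip (\<beta> + real s) 0 (S_w Y (\<beta> + real s) 0 (n - s) m l) (S_w Y (\<beta> + real s) 0 (n - s) m l)
    * S_w Y (\<beta> + real s) 0 (n - s) m l x t" for m l
  have "sob_ip \<beta> s lam f (S_sob Y \<beta> s n m l) / sob_ip \<beta> s lam (S_sob Y \<beta> s n m l) (S_sob Y \<beta> s n m l)
      * dt s (S_sob Y \<beta> s n m l) x t = (if m \<le> n - s then W m l else 0)" if "l < N m" for m l
  proof (cases "m \<le> n - s")
    case True
    then show ?thesis
      using sob_coefficient_eq_w_coefficient[OF s(1) \<beta> basis that _ f, of n] s(2) by (simp add: W_def)
  next
    case False
    then have "n < m + s"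
      by linarith
    with False show ?thesis
      by (simp add: dt_order_S_sob_eq_0[OF s(1)])
  qed
  then have "dt s (proj_sob N Y \<beta> s lam n f) x t = (\<Sum>m\<le>n. if m \<le> n - s then \<Sum>l<N m. W m l else 0)"
    unfolding dt_proj_sob[OF s(1)] by (auto intro!: sum.cong)
  also have "\<dots> = (\<Sum>m\<in>{m\<in>{..n}. m \<le> n - s}. \<Sum>l<N m. W m l)"
    by (rule sum.inter_filter[symmetric]) simp
  also have "\<dots> = (\<Sum>m\<le>n - s. \<Sum>l<N m. W m l)"
    by (rule sum.cong) auto
  also have "\<dots> = proj_w N Y (\<beta> + real s) 0 (n - s) (dt s f) x t"
    by (simp add: proj_w_def W_def)
  finally show ?thesis .
qed

theorem mainTheorem6:
  fixes N :: "nat \<Rightarrow> nat" and Y :: "nat \<Rightarrow> nat \<Rightarrow> real^'d::finite \<Rightarrow> real"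
    and \<beta> :: real and s :: nat and lam :: "nat \<Rightarrow> real"
    and f :: "real^'d \<Rightarrow> real \<Rightarrow> real" and U :: "((real^'d) \<times> real) set"
  assumes d2: "CARD('d) \<ge> 2"
    and s1: "s \<ge> 1"
    and beta: "\<beta> > - real CARD('d) - real s"
    and lam_pos: "\<forall>k<s. lam k > 0"
    and basis: "sph_harm_basis N Y"
    and U_open: "open U" and cone_U: "cone \<subseteq> U"
    and f_diff: "\<forall>k<s. \<forall>(x, t)\<in>U. (dt k f x has_real_derivative dt (Suc k) f x t) (at t)"
    and f_cont: "\<forall>k\<le>s. continuous_on U (\<lambda>(x, t). dt k f x t)"
    and f_L2: "set_integrable lborel (cball 0 1)
                 (\<lambda>y::real^'d. (dt s f y (norm y))\<^sup>2 * norm y powr (\<beta> + real s))"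
  shows "\<forall>n\<ge>s. \<forall>x t. dt s (proj_sob N Y \<beta> s lam n f) x t
                     = proj_w N Y (\<beta> + real s) 0 (n - s) (dt s f) x t"
proof (intro allI impI)
  fix n x t
  assume "s \<le> n"
  have "continuous_on (cball 0 1) (\<lambda>y. dt s f y (norm y))"
    using f_cont cone_U by (auto intro: continuous_on_cone_restriction)
  then show "dt s (proj_sob N Y \<beta> s lam n f) x t = proj_w N Y (\<beta> + real s) 0 (n - s) (dt s f) x t"
    using dt_proj_sob_eq_proj_w[OF s1 \<open>s \<le> n\<close> beta basis] by blast
qed

end
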